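(* Let $\mathcal{H}=\bigotimes_{a=1}^N\mathcal{H}_a$ be a finite-dimensional multipartite Hilbert space, let $\mathcal{N}=\{\mathcal{N}_k\}_{k=1}^M$ be a non-trivial neighborhood structure, and let $\rho\in\mathcal{D}(\mathcal{H})$. Then every state $\sigma$ in the joining set $\mathcal{M}_{\mathcal{N}}(\rho)$ satisfies $\mathrm{supp}(\sigma)\subseteq\mathcal{H}_{\mathcal{N}}(\rho)$.
   Context: $\mathcal{H}=\bigotimes_{a=1}^N\mathcal{H}_a$ with $\dim\mathcal{H}_a=d_a<\infty$; $\mathcal{D}(\mathcal{H})$ is the set of density operators (positive semidefinite, trace one) on $\mathcal{H}$. A neighborhood is a subset $\mathcal{N}_k\subsetneq\{1,\dots,N\}$ and a neighborhood structure is a finite collection $\mathcal{N}=\{\mathcal{N}_k\}_{k=1}^M$ of neighborhoods; it is non-trivial if every index $j\in\{1,\dots,N\}$ belongs to some $\mathcal{N}_k$ and every $\mathcal{N}_k$ overlaps (has nonempty intersection) with at least one other $\mathcal{N}_{k'}$. For a state $\rho$, $\overline{\mathcal{N}}_k$ denotes the complement of $\mathcal{N}_k$ and $\rho_{\mathcal{N}_k}=\mathrm{tr}_{\overline{\mathcal{N}}_k}(\rho)$ is the reduced density matrix on $\mathcal{N}_k$. The joining set is $\mathcal{M}_{\mathcal{N}}(\rho)=\{\sigma\in\mathcal{D}(\mathcal{H}):\mathrm{tr}_{\overline{\mathcal{N}}_k}\rho=\mathrm{tr}_{\overline{\mathcal{N}}_k}\sigma\ \forall\,\mathcal{N}_k\in\mathcal{N}\}$.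 The DQLS subspace of $\rho$ relative to $\mathcal{N}$ is $\mathcal{H}_{\mathcal{N}}(\rho)=\bigcap_{\mathcal{N}_k\in\mathcal{N}}\mathrm{supp}(\rho_{\mathcal{N}_k}\otimes I_{\overline{\mathcal{N}}_k})$. *)

theory Defs
  imports "HOL-Analysis.Analysis" "HOL-Library.Complex_Order"
begin

text \<open>Multipartite finite-dimensional Hilbert space H = H_0 (x) ... (x) H_(N-1),
  dim H_a = d a. Computational basis vectors are labelled by multi-indices
  i :: nat => nat with i a < d a for the subsystems a in a set S, and i a = 0
  elsewhere (a canonical padding).\<close>

type_synonym mindex = "nat \<Rightarrow> nat"
type_synonym op = "mindex \<Rightarrow> mindex \<Rightarrow> complex"
type_synonym vec = "mindex \<Rightarrow> complex"

definition idx :: "(nat \<Rightarrow> nat) \<Rightarrow> nat set \<Rightarrow> mindex set" where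
  "idx d S = {i. \<forall>a. (a \<in> S \<longrightarrow> i a < d a) \<and> (a \<notin> S \<longrightarrow> i a = 0)}"

abbreviation full :: "nat \<Rightarrow> nat set" where "full N \<equiv> {0..<N}"

definition psd_op :: "(nat \<Rightarrow> nat) \<Rightarrow> nat \<Rightarrow> op \<Rightarrow> bool" where
  "psd_op d N A \<longleftrightarrow> (\<forall>\<psi> :: vec.
     0 \<le> (\<Sum>i\<in>idx d (full N). \<Sum>j\<in>idx d (full N). cnj (\<psi> i) * A i j * \<psi> j))"

definition density :: "(nat \<Rightarrow> nat) \<Rightarrow> nat \<Rightarrow> op \<Rightarrow> bool" where
  "density d N A \<longleftrightarrow> psd_op d N A \<and> (\<Sum>i\<in>idx d (full N). A i i) = 1"

definition merge :: "nat set \<Rightarrow> mindex \<Rightarrow> mindex \<Rightarrow> mindex" where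
  "merge S i k = (\<lambda>a. if a \<in> S then i a else k a)"

definition restr :: "nat set \<Rightarrow> mindex \<Rightarrow> mindex" where
  "restr S i = (\<lambda>a. if a \<in> S then i a else 0)"

definition ptrace :: "(nat \<Rightarrow> nat) \<Rightarrow> nat \<Rightarrow> nat set \<Rightarrow> op \<Rightarrow> op" where
  "ptrace d N S \<rho> = (\<lambda>i j.
     if i \<in> idx d S \<and> j \<in> idx d S
     then (\<Sum>k\<in>idx d (full N - S). \<rho> (merge S i k) (merge S j k))
     else 0)"

text \<open>rho_S (x) I on the complement of S, as an operator on the whole space.\<close>
definition tensor_id :: "(nat \<Rightarrow> nat) \<Rightarrow> nat \<Rightarrow> nat set \<Rightarrow> op \<Rightarrow> op" where
  "tensor_id d N S X = (\<lambda>i j.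
     if i \<in> idx d (full N) \<and> j \<in> idx d (full N)
     then X (restr S i) (restr S j) *
          (if restr (full N - S) i = restr (full N - S) j then 1 else 0)
     else 0)"

definition apply_op :: "(nat \<Rightarrow> nat) \<Rightarrow> nat \<Rightarrow> op \<Rightarrow> vec \<Rightarrow> vec" where
  "apply_op d N A \<psi> = (\<lambda>i. if i \<in> idx d (full N)
      then (\<Sum>j\<in>idx d (full N). A i j * \<psi> j) else 0)"

text \<open>Support of a (Hermitian) operator = its range (span of eigenvectors with
  nonzero eigenvalue).\<close>
definition supp :: "(nat \<Rightarrow> nat) \<Rightarrow> nat \<Rightarrow> op \<Rightarrow> vec set" where
  "supp d N A = range (apply_op d N A)"

definition nontrivial_nbhd :: "nat \<Rightarrow> nat \<Rightarrow> (nat \<Rightarrow> nat set) \<Rightarrow> bool" where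
  "nontrivial_nbhd N M Nb \<longleftrightarrow>
     (\<forall>k<M. Nb k \<subset> full N) \<and>
     (\<forall>j<N. \<exists>k<M. j \<in> Nb k) \<and>
     (\<forall>k<M. \<exists>k'<M. k' \<noteq> k \<and> Nb k \<inter> Nb k' \<noteq> {})"

definition joining_set :: "(nat \<Rightarrow> nat) \<Rightarrow> nat \<Rightarrow> nat \<Rightarrow> (nat \<Rightarrow> nat set) \<Rightarrow> op \<Rightarrow> op set" where
  "joining_set d N M Nb \<rho> =
     {\<sigma>. density d N \<sigma> \<and> (\<forall>k<M. ptrace d N (Nb k) \<rho> = ptrace d N (Nb k) \<sigma>)}"

definition DQLS_subspace :: "(nat \<Rightarrow> nat) \<Rightarrow> nat \<Rightarrow> nat \<Rightarrow> (nat \<Rightarrow> nat set) \<Rightarrow> op \<Rightarrow> vec set" where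
  "DQLS_subspace d N M Nb \<rho> =
     (\<Inter>k\<in>{..<M}. supp d N (tensor_id d N (Nb k) (ptrace d N (Nb k) \<rho>)))"

end

(*
  Fix a neighbourhood S and a positive semidefinite sigma. If (sigma_S \<otimes> I) r = 0, then for
  every basis state k of the complement the slice h = r(-, k) satisfies
  0 = <h, sigma_S h> = \<Sum>k'. <h \<otimes> k', sigma (h \<otimes> k')>, so by positivity each h \<otimes> k' lies in
  the kernel of sigma, and hence so does r. Thus ker (sigma_S \<otimes> I) \<subseteq> ker sigma, and for
  Hermitian operators this reverses to supp sigma \<subseteq> supp (sigma_S \<otimes> I): the part of a vector
  of supp sigma orthogonal to supp (sigma_S \<otimes> I) lies in ker (sigma_S \<otimes> I), hence in ker sigma,
  hence is orthogonal to supp sigma, so it vanishes. Every sigma in the joining set has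
  sigma_S = rho_S for all neighbourhoods S, which gives the theorem.
*)

theory Submission
  imports Defs "HOL-Library.Function_Algebras"
begin

definition vinner :: "mindex set \<Rightarrow> vec \<Rightarrow> vec \<Rightarrow> complex" where
  "vinner I x y = (\<Sum>i\<in>I. cnj (x i) * y i)"

definition op_apply :: "mindex set \<Rightarrow> op \<Rightarrow> vec \<Rightarrow> vec" where
  "op_apply I A x = (\<lambda>i. if i \<in> I then (\<Sum>j\<in>I. A i j * x j) else 0)"

definition sesq :: "mindex set \<Rightarrow> op \<Rightarrow> vec \<Rightarrow> vec \<Rightarrow> complex" where
  "sesq I A x y = (\<Sum>i\<in>I. \<Sum>j\<in>I. cnj (x i) * A i j * y j)"

definition psd_on :: "mindex set \<Rightarrow> op \<Rightarrow> bool" where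
  "psd_on I A \<longleftrightarrow> (\<forall>x. 0 \<le> sesq I A x x)"

definition hermitian_on :: "mindex set \<Rightarrow> op \<Rightarrow> bool" where
  "hermitian_on I A \<longleftrightarrow> (\<forall>i\<in>I. \<forall>j\<in>I. A i j = cnj (A j i))"

definition basis_vec :: "mindex \<Rightarrow> vec" where
  "basis_vec j = (\<lambda>i. if i = j then 1 else 0)"

inductive_set lin_span :: "vec set \<Rightarrow> vec set" for V where
  zero: "0 \<in> lin_span V"
| base: "v \<in> V \<Longrightarrow> v \<in> lin_span V"
| add: "x \<in> lin_span V \<Longrightarrow> y \<in> lin_span V \<Longrightarrow> x + y \<in> lin_span V"
| scale: "x \<in> lin_span V \<Longrightarrow> (\<lambda>i. c * x i) \<in> lin_span V"

lemma lin_span_mono: "x \<in> lin_span V \<Longrightarrow> V \<subseteq> W \<Longrightarrow> x \<in> lin_span W"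
  by (induction rule: lin_span.induct) (auto intro: lin_span.intros)

lemma vinner_add_left: "vinner I (x + y) z = vinner I x z + vinner I y z"
  by (simp add: vinner_def distrib_right sum.distrib)

lemma vinner_diff_right: "vinner I x (y - z) = vinner I x y - vinner I x z"
  by (simp add: vinner_def right_diff_distrib sum_subtractf)

lemma vinner_scale_right: "vinner I x (\<lambda>i. c * y i) = c * vinner I x y"
  by (simp add: vinner_def sum_distrib_left mult.left_commute)

lemma vinner_cnj_commute: "vinner I x y = cnj (vinner I y x)"
  by (simp add: vinner_def mult.commute)

lemma vinner_self: "vinner I x x = of_real (\<Sum>i\<in>I. (cmod (x i))\<^sup>2)"
  by (simp add: vinner_def complex_norm_square mult.commute del: of_real_power)

lemma vinner_self_eq_0:
  assumes "finite I" "vinner I x x = 0" "i \<in> I"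
  shows "x i = 0"
  using assms by (simp add: vinner_self sum_nonneg_eq_0_iff del: of_real_sum)

lemma vinner_basis_vec_left:
  assumes "finite I" "j \<in> I"
  shows "vinner I (basis_vec j) x = x j"
proof -
  have "vinner I (basis_vec j) x = (\<Sum>i\<in>I. if j = i then x i else 0)"
    unfolding vinner_def basis_vec_def by (rule sum.cong) auto
  then show ?thesis
    using assms by simp
qed

lemma vinner_lin_span_left:
  "x \<in> lin_span V \<Longrightarrow> \<forall>v\<in>V. vinner I v r = 0 \<Longrightarrow> vinner I x r = 0"
  by (induction rule: lin_span.induct)
    (simp_all add: vinner_def distrib_right sum.distrib mult.assoc flip: sum_distrib_left)

lemma op_apply_outside [simp]: "i \<notin> I \<Longrightarrow> op_apply I A x i = 0"
  by (simp add: op_apply_def)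

lemma op_apply_add: "op_apply I A (x + y) = op_apply I A x + op_apply I A y"
  by (auto simp: op_apply_def distrib_left sum.distrib)

lemma op_apply_scale: "op_apply I A (\<lambda>i. c * x i) = (\<lambda>i. c * op_apply I A x i)"
  by (auto simp: op_apply_def sum_distrib_left mult.left_commute)

lemma op_apply_basis_vec:
  assumes "finite I" "i \<in> I" "j \<in> I"
  shows "op_apply I A (basis_vec j) i = A i j"
proof -
  have "op_apply I A (basis_vec j) i = (\<Sum>k\<in>I. if j = k then A i k else 0)"
    unfolding op_apply_def basis_vec_def using assms(2) by (auto intro: sum.cong)
  then show ?thesis
    using assms by simp
qed

lemma lin_span_subset_range:
  "x \<in> lin_span V \<Longrightarrow> V \<subseteq> range (op_apply I A) \<Longrightarrow> x \<in> range (op_apply I A)"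
proof (induction rule: lin_span.induct)
  case zero
  have "op_apply I A 0 = 0"
    by (simp add: op_apply_def fun_eq_iff)
  then show ?case
    by (metis rangeI)
next
  case (base v)
  then show ?case by blast
next
  case (add x y)
  then obtain a b where "x = op_apply I A a" "y = op_apply I A b"
    by blast
  then have "x + y = op_apply I A (a + b)"
    by (simp add: op_apply_add)
  then show ?case
    by simp
next
  case (scale x c)
  then obtain a where "x = op_apply I A a"
    by blast
  then have "(\<lambda>i. c * x i) = op_apply I A (\<lambda>i. c * a i)"
    by (simp add: op_apply_scale)
  then show ?case
    by simp
qed

lemma sesq_eq_vinner: "sesq I A x y = vinner I x (op_apply I A y)"
  by (simp add: sesq_def vinner_def op_apply_def sum_distrib_left mult.assoc)

lemma vinner_op_apply_hermitian:
  assumes "hermitian_on I A"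
  shows "vinner I (op_apply I A x) y = vinner I x (op_apply I A y)"
proof -
  have "vinner I (op_apply I A x) y = (\<Sum>i\<in>I. \<Sum>j\<in>I. cnj (x j) * cnj (A i j) * y i)"
    unfolding vinner_def op_apply_def
    by (simp add: sum_distrib_left sum_distrib_right mult.commute mult.left_commute)
  also have "\<dots> = (\<Sum>i\<in>I. \<Sum>j\<in>I. cnj (x j) * A j i * y i)"
    using assms by (intro sum.cong refl) (metis hermitian_on_def)
  also have "\<dots> = vinner I x (op_apply I A y)"
    unfolding vinner_def op_apply_def by (subst sum.swap) (simp add: sum_distrib_left mult.assoc)
  finally show ?thesis .
qed

lemma sesq_add_scale:
  "sesq I A (x + (\<lambda>i. c * y i)) (x + (\<lambda>i. c * y i))
     = sesq I A x x + c * sesq I A x y + cnj c * sesq I A y x + cnj c * c * sesq I A y y"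
  by (simp add: sesq_def algebra_simps sum.distrib sum_distrib_left)

lemma psd_on_imp_hermitian:
  assumes "finite I" "psd_on I A"
  shows "hermitian_on I A"
  unfolding hermitian_on_def
proof (intro ballI)
  fix i j assume ij: "i \<in> I" "j \<in> I"
  define p q where "p = sesq I A (basis_vec i) (basis_vec j)" and "q = sesq I A (basis_vec j) (basis_vec i)"
  have real: "Im (sesq I A x x) = 0" for x
    using assms(2) by (simp add: psd_on_def less_eq_complex_def)
  have "Im (c * p + cnj c * q) = 0" for c
    using real[of "basis_vec i + (\<lambda>k. c * basis_vec j k)", unfolded sesq_add_scale,
        folded p_def q_def] real[of "basis_vec i"] real[of "basis_vec j"]
    by simp
  from this[of 1] this[of \<i>] have "p = cnj q"
    by (simp add: complex_eq_iff)
  then show "A i j = cnj (A j i)"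
    using ij assms(1) by (simp add: p_def q_def sesq_eq_vinner vinner_basis_vec_left op_apply_basis_vec)
qed

lemma psd_on_kernel:
  assumes "finite I" "psd_on I A" "sesq I A x x = 0"
  shows "op_apply I A x = 0"
proof -
  define w where "w = op_apply I A x"
  define s where "s = (\<Sum>i\<in>I. (cmod (w i))\<^sup>2)"
  define q where "q = Re (sesq I A w w)"
  have herm: "hermitian_on I A"
    using assms(1,2) by (rule psd_on_imp_hermitian)
  have q: "0 \<le> q" "sesq I A w w = of_real q"
    using assms(2) by (auto simp: q_def psd_on_def less_eq_complex_def complex_eq_iff)
  have wx: "sesq I A w x = of_real s"
    by (simp add: sesq_eq_vinner s_def w_def vinner_self)
  have xw: "sesq I A x w = of_real s"
    by (simp add: sesq_eq_vinner s_def w_def vinner_self flip: vinner_op_apply_hermitian[OF herm])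
  have expansion: "0 \<le> -2 * e * s + e\<^sup>2 * q" for e :: real
  proof -
    have "0 \<le> Re (sesq I A (x + (\<lambda>i. c * w i)) (x + (\<lambda>i. c * w i)))" for c
      using assms(2) by (simp add: psd_on_def less_eq_complex_def)
    from this[of "of_real (-e)", unfolded sesq_add_scale] show ?thesis
      by (simp add: assms(3) wx xw q power2_eq_square)
  qed
  \<comment> \<open>a linear term dominated by a quadratic one near zero must vanish\<close>
  have "s = 0"
  proof (rule ccontr)
    assume "s \<noteq> 0"
    then have "0 < s"
      by (simp add: s_def sum_nonneg order_le_neq_trans)
    define e where "e = s / (q + 1)"
    have "s = e * (q + 1)"
      using q(1) by (simp add: e_def)
    then have "-2 * e * s + e\<^sup>2 * q = e\<^sup>2 * (- q - 2)"
      by (simp add: algebra_simps power2_eq_square)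
    also have "\<dots> < 0"
      using \<open>0 < s\<close> q(1) by (intro mult_pos_neg) (auto simp: e_def)
    finally show False
      using expansion[of e] by simp
  qed
  then have "vinner I w w = 0"
    by (simp add: vinner_self s_def)
  then have "\<forall>i\<in>I. w i = 0"
    using vinner_self_eq_0[OF assms(1)] by blast
  then show ?thesis
    by (auto simp: w_def fun_eq_iff)
qed

lemma orthogonal_projection_lin_span:
  assumes "finite V" "finite I"
  shows "\<exists>y\<in>lin_span V. \<forall>v\<in>V. vinner I v (\<phi> - y) = 0"
  using assms(1)
proof (induction arbitrary: \<phi> rule: finite_induct)
  case empty
  then show ?case
    using lin_span.zero by blast
next
  case (insert w V)
  obtain y where y: "y \<in> lin_span V" "\<forall>v\<in>V. vinner I v (\<phi> - y) = 0"
    using insert.IH by blast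
  obtain z where z: "z \<in> lin_span V" "\<forall>v\<in>V. vinner I v (w - z) = 0"
    using insert.IH by blast
  define u where "u = w - z"
  define c where "c = vinner I u (\<phi> - y) / vinner I u u"
  define y' where "y' = y + (\<lambda>i. c * w i) + (\<lambda>i. (- c) * z i)"
  have "y \<in> lin_span (insert w V)" "z \<in> lin_span (insert w V)" "w \<in> lin_span (insert w V)"
    using lin_span_mono[OF y(1) subset_insertI] lin_span_mono[OF z(1) subset_insertI]
    by (auto intro: lin_span.base)
  then have y'_span: "y' \<in> lin_span (insert w V)"
    unfolding y'_def by (blast intro: lin_span.add lin_span.scale)
  have residual: "\<phi> - y' = (\<phi> - y) - (\<lambda>i. c * u i)"
    by (simp add: y'_def u_def fun_eq_iff algebra_simps)
  have perp_V: "\<forall>v\<in>V. vinner I v (\<phi> - y') = 0"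
    using y(2) z(2) unfolding u_def[symmetric] by (simp add: residual vinner_diff_right vinner_scale_right)
  have perp_u: "vinner I u (\<phi> - y') = 0"
  proof (cases "vinner I u u = 0")
    case True
    then show ?thesis
      using vinner_self_eq_0[OF assms(2) True] by (simp add: vinner_def)
  next
    case False
    then show ?thesis
      unfolding residual vinner_diff_right vinner_scale_right c_def by simp
  qed
  have "vinner I w (\<phi> - y') = vinner I u (\<phi> - y') + vinner I z (\<phi> - y')"
    by (simp add: u_def flip: vinner_add_left)
  also have "\<dots> = 0"
    using perp_u vinner_lin_span_left[OF z(1) perp_V] by simp
  finally show ?case
    using y'_span perp_V by blast
qed

lemma range_op_apply_subset_if_kernel_subset:
  assumes "finite I" "hermitian_on I T" "hermitian_on I B"
    and kernel: "\<And>r. op_apply I T r = 0 \<Longrightarrow> op_apply I B r = 0"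
  shows "range (op_apply I B) \<subseteq> range (op_apply I T)"
proof
  fix \<phi> assume "\<phi> \<in> range (op_apply I B)"
  then obtain \<psi> where \<phi>: "\<phi> = op_apply I B \<psi>"
    by blast
  define C where "C = op_apply I T ` basis_vec ` I"
  obtain y where y: "y \<in> lin_span C" "\<forall>v\<in>C. vinner I v (\<phi> - y) = 0"
    using orthogonal_projection_lin_span[of C I \<phi>] assms(1) by (auto simp: C_def)
  have y_range: "y \<in> range (op_apply I T)"
    using y(1) by (rule lin_span_subset_range) (auto simp: C_def)
  define r where "r = \<phi> - y"
  \<comment> \<open>the residual is orthogonal to every column of T, hence lies in its kernel\<close>
  have "op_apply I T r = 0"
  proof
    fix j
    show "op_apply I T r j = 0 j"
    proof (cases "j \<in> I")
      case True
      have "op_apply I T r j = vinner I (op_apply I T (basis_vec j)) r"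
        using assms(1,2) True by (simp add: vinner_op_apply_hermitian vinner_basis_vec_left)
      also have "\<dots> = 0"
        using y(2) True by (simp add: C_def r_def)
      finally show ?thesis
        by simp
    qed simp
  qed
  then have "op_apply I B r = 0"
    by (rule kernel)
  then have "vinner I r \<phi> = 0"
    using vinner_op_apply_hermitian[OF assms(3), of r \<psi>] by (simp add: \<phi> vinner_def)
  moreover have "vinner I r y = 0"
    using vinner_lin_span_left[OF y(1), of I r] y(2) vinner_cnj_commute[of I r y]
    by (simp add: r_def)
  ultimately have "vinner I r r = 0"
    by (simp add: r_def vinner_diff_right)
  then have "r i = 0" if "i \<in> I" for i
    using vinner_self_eq_0[OF assms(1)] that by blast
  then have "\<phi> i = y i" for i
    using y_range by (cases "i \<in> I") (auto simp: r_def \<phi>)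
  then show "\<phi> \<in> range (op_apply I T)"
    using y_range by (metis ext)
qed

lemma finite_idx:
  assumes "finite S"
  shows "finite (idx d S)"
proof -
  have "idx d S \<subseteq> restr S ` PiE S (\<lambda>a. {..<d a})"
  proof
    fix i assume i: "i \<in> idx d S"
    then have "restr S (restrict i S) = i" "restrict i S \<in> PiE S (\<lambda>a. {..<d a})"
      by (auto simp: idx_def restr_def)
    then show "i \<in> restr S ` PiE S (\<lambda>a. {..<d a})"
      by (metis image_eqI)
  qed
  then show ?thesis
    using assms by (meson finite_PiE finite_imageI finite_lessThan finite_subset)
qed

lemma merge_in_idx: "S \<subseteq> F \<Longrightarrow> i \<in> idx d S \<Longrightarrow> k \<in> idx d (F - S) \<Longrightarrow> merge S i k \<in> idx d F"
  by (auto simp: idx_def merge_def)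

lemma restr_in_idx: "S \<subseteq> F \<Longrightarrow> y \<in> idx d F \<Longrightarrow> restr S y \<in> idx d S"
  by (auto simp: idx_def restr_def)

lemma restr_diff_in_idx: "y \<in> idx d F \<Longrightarrow> restr (F - S) y \<in> idx d (F - S)"
  by (auto simp: idx_def restr_def)

lemma restr_merge: "i \<in> idx d S \<Longrightarrow> restr S (merge S i k) = i"
  by (auto simp: idx_def merge_def restr_def)

lemma restr_diff_merge: "k \<in> idx d (F - S) \<Longrightarrow> restr (F - S) (merge S i k) = k"
  by (auto simp: idx_def merge_def restr_def)

lemma merge_restr: "S \<subseteq> F \<Longrightarrow> y \<in> idx d F \<Longrightarrow> merge S (restr S y) (restr (F - S) y) = y"
  by (auto simp: idx_def merge_def restr_def)

lemma sum_idx_split: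
  assumes "S \<subseteq> F"
  shows "(\<Sum>y\<in>idx d F. f y) = (\<Sum>i\<in>idx d S. \<Sum>k\<in>idx d (F - S). f (merge S i k))"
proof -
  have "(\<Sum>i\<in>idx d S. \<Sum>k\<in>idx d (F - S). f (merge S i k))
      = (\<Sum>p\<in>idx d S \<times> idx d (F - S). f (merge S (fst p) (snd p)))"
    by (simp add: sum.cartesian_product split_def)
  also have "\<dots> = (\<Sum>y\<in>idx d F. f y)"
    by (rule sum.reindex_bij_witness[of _ "\<lambda>y. (restr S y, restr (F - S) y)"
          "\<lambda>p. merge S (fst p) (snd p)"])
      (auto simp: assms merge_in_idx restr_in_idx[OF assms] restr_diff_in_idx restr_merge
        restr_diff_merge merge_restr)
  finally show ?thesis
    by simp
qed

text \<open>The product vector h \<otimes> |k\<rangle> for an index k of the complement F - S.\<close>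

definition slice_vec :: "nat set \<Rightarrow> nat set \<Rightarrow> mindex \<Rightarrow> vec \<Rightarrow> vec" where
  "slice_vec F S k h = (\<lambda>y. if restr (F - S) y = k then h (restr S y) else 0)"

lemma sum_slice_vec:
  assumes "finite F" "S \<subseteq> F" "k \<in> idx d (F - S)"
  shows "(\<Sum>y\<in>idx d F. g y * slice_vec F S k h y) = (\<Sum>j\<in>idx d S. g (merge S j k) * h j)"
proof -
  have "(\<Sum>y\<in>idx d F. g y * slice_vec F S k h y)
      = (\<Sum>j\<in>idx d S. \<Sum>k'\<in>idx d (F - S). if k = k' then g (merge S j k') * h j else 0)"
    unfolding sum_idx_split[OF assms(2)] slice_vec_def
    by (intro sum.cong refl) (auto simp: restr_merge restr_diff_merge)
  also have "\<dots> = (\<Sum>j\<in>idx d S. g (merge S j k) * h j)"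
    using assms(1,3) finite_idx[of "F - S" d] by simp
  finally show ?thesis .
qed

lemma sesq_slice_vec:
  assumes "finite F" "S \<subseteq> F" "k \<in> idx d (F - S)"
  shows "sesq (idx d F) A (slice_vec F S k h) (slice_vec F S k h)
    = sesq (idx d S) (\<lambda>i j. A (merge S i k) (merge S j k)) h h"
proof -
  let ?v = "slice_vec F S k h"
  have "sesq (idx d F) A ?v ?v
      = (\<Sum>x\<in>idx d F. (\<Sum>j\<in>idx d S. A x (merge S j k) * h j) * slice_vec F S k (\<lambda>j. cnj (h j)) x)"
    unfolding sesq_def
  proof (rule sum.cong[OF refl])
    fix x
    have "(\<Sum>y\<in>idx d F. cnj (?v x) * A x y * ?v y) = cnj (?v x) * (\<Sum>y\<in>idx d F. A x y * ?v y)"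
      by (simp add: sum_distrib_left mult.assoc)
    also have "\<dots> = cnj (?v x) * (\<Sum>j\<in>idx d S. A x (merge S j k) * h j)"
      by (simp add: sum_slice_vec[OF assms])
    finally show "(\<Sum>y\<in>idx d F. cnj (?v x) * A x y * ?v y)
        = (\<Sum>j\<in>idx d S. A x (merge S j k) * h j) * slice_vec F S k (\<lambda>j. cnj (h j)) x"
      by (simp add: slice_vec_def mult.commute)
  qed
  also have "\<dots> = (\<Sum>i\<in>idx d S. (\<Sum>j\<in>idx d S. A (merge S i k) (merge S j k) * h j) * cnj (h i))"
    by (rule sum_slice_vec[OF assms])
  also have "\<dots> = sesq (idx d S) (\<lambda>i j. A (merge S i k) (merge S j k)) h h"
    by (simp add: sesq_def sum_distrib_left sum_distrib_right mult.commute mult.left_commute)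
  finally show ?thesis .
qed

lemma sesq_ptrace:
  assumes "S \<subseteq> full N"
  shows "sesq (idx d S) (ptrace d N S A) h h
    = (\<Sum>k\<in>idx d (full N - S).
        sesq (idx d (full N)) A (slice_vec (full N) S k h) (slice_vec (full N) S k h))"
proof -
  let ?S = "idx d S" and ?C = "idx d (full N - S)"
  have "sesq ?S (ptrace d N S A) h h
      = (\<Sum>i\<in>?S. \<Sum>j\<in>?S. \<Sum>k\<in>?C. cnj (h i) * A (merge S i k) (merge S j k) * h j)"
    by (simp add: sesq_def ptrace_def sum_distrib_left sum_distrib_right)
  also have "\<dots> = (\<Sum>k\<in>?C. \<Sum>i\<in>?S. \<Sum>j\<in>?S. cnj (h i) * A (merge S i k) (merge S j k) * h j)"
    by (subst sum.swap) (simp add: sum.swap[of _ ?C])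
  also have "\<dots> = (\<Sum>k\<in>?C. sesq ?S (\<lambda>i j. A (merge S i k) (merge S j k)) h h)"
    by (simp add: sesq_def)
  also have "\<dots> = (\<Sum>k\<in>?C.
      sesq (idx d (full N)) A (slice_vec (full N) S k h) (slice_vec (full N) S k h))"
    using assms by (intro sum.cong refl) (simp add: sesq_slice_vec)
  finally show ?thesis .
qed

lemma tensor_id_merge:
  assumes "S \<subseteq> full N" "i \<in> idx d S" "j \<in> idx d S"
    and "k \<in> idx d (full N - S)" "k' \<in> idx d (full N - S)"
  shows "tensor_id d N S X (merge S i k) (merge S j k') = (if k = k' then X i j else 0)"
  using merge_in_idx[OF assms(1,2,4)] merge_in_idx[OF assms(1,3,5)] assms
  by (simp add: tensor_id_def restr_merge restr_diff_merge)

lemma op_apply_tensor_id_merge: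
  assumes "S \<subseteq> full N" "i \<in> idx d S" "k \<in> idx d (full N - S)"
  shows "op_apply (idx d (full N)) (tensor_id d N S X) r (merge S i k)
    = op_apply (idx d S) X (\<lambda>j. r (merge S j k)) i"
proof -
  have "op_apply (idx d (full N)) (tensor_id d N S X) r (merge S i k)
      = (\<Sum>j\<in>idx d S. \<Sum>k'\<in>idx d (full N - S). if k = k' then X i j * r (merge S j k') else 0)"
    unfolding op_apply_def sum_idx_split[OF assms(1)] using merge_in_idx[OF assms] assms
    by (auto simp: tensor_id_merge intro!: sum.cong)
  also have "\<dots> = op_apply (idx d S) X (\<lambda>j. r (merge S j k)) i"
    using assms(2,3) by (simp add: op_apply_def finite_idx)
  finally show ?thesis .
qed

lemma kernel_tensor_id_ptrace_subset:
  assumes "S \<subseteq> full N" "psd_on (idx d (full N)) A"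
    and "op_apply (idx d (full N)) (tensor_id d N S (ptrace d N S A)) r = 0"
  shows "op_apply (idx d (full N)) A r = 0"
proof -
  let ?I = "idx d (full N)" and ?C = "idx d (full N - S)"
  define h where "h k = (\<lambda>j. r (merge S j k))" for k
  have slice_null: "op_apply ?I A (slice_vec (full N) S k (h k)) = 0" if k: "k \<in> ?C" for k
  proof -
    have "op_apply (idx d S) (ptrace d N S A) (h k) = 0"
    proof
      fix i
      show "op_apply (idx d S) (ptrace d N S A) (h k) i = 0 i"
        using op_apply_tensor_id_merge[OF assms(1) _ k, of i "ptrace d N S A" r] assms(3)
        by (cases "i \<in> idx d S") (simp_all add: h_def)
    qed
    then have "(\<Sum>k'\<in>?C. sesq ?I A (slice_vec (full N) S k' (h k)) (slice_vec (full N) S k' (h k))) = 0"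
      unfolding sesq_ptrace[OF assms(1), symmetric] by (simp add: sesq_eq_vinner vinner_def)
    then have "sesq ?I A (slice_vec (full N) S k (h k)) (slice_vec (full N) S k (h k)) = 0"
      using assms(2) k finite_idx[of "full N - S" d] by (simp add: psd_on_def sum_nonneg_eq_0_iff)
    then show ?thesis
      using assms(2) finite_idx[of "full N" d] by (simp add: psd_on_kernel)
  qed
  show ?thesis
  proof
    fix x
    show "op_apply ?I A r x = 0 x"
    proof (cases "x \<in> ?I")
      case True
      have "op_apply ?I A r x = (\<Sum>k\<in>?C. \<Sum>j\<in>idx d S. A x (merge S j k) * h k j)"
        using True by (simp add: op_apply_def sum_idx_split[OF assms(1)] h_def sum.swap[of _ "idx d S"])
      also have "\<dots> = (\<Sum>k\<in>?C. op_apply ?I A (slice_vec (full N) S k (h k)) x)"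
        using True assms(1) by (intro sum.cong refl) (simp add: op_apply_def sum_slice_vec)
      also have "\<dots> = 0"
        using slice_null by simp
      finally show ?thesis
        by simp
    qed simp
  qed
qed

lemma ptrace_hermitian:
  assumes "hermitian_on (idx d (full N)) A" "S \<subseteq> full N"
  shows "hermitian_on (idx d S) (ptrace d N S A)"
  unfolding hermitian_on_def
proof (intro ballI)
  fix i j assume i: "i \<in> idx d S" and j: "j \<in> idx d S"
  have "(\<Sum>k\<in>idx d (full N - S). A (merge S i k) (merge S j k))
      = (\<Sum>k\<in>idx d (full N - S). cnj (A (merge S j k) (merge S i k)))"
  proof (rule sum.cong[OF refl])
    fix k assume "k \<in> idx d (full N - S)"
    then show "A (merge S i k) (merge S j k) = cnj (A (merge S j k) (merge S i k))"
      using assms(1) merge_in_idx[OF assms(2) i] merge_in_idx[OF assms(2) j]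
      unfolding hermitian_on_def by blast
  qed
  then show "ptrace d N S A i j = cnj (ptrace d N S A j i)"
    using i j by (simp add: ptrace_def)
qed

lemma tensor_id_hermitian:
  assumes "hermitian_on (idx d S) X" "S \<subseteq> full N"
  shows "hermitian_on (idx d (full N)) (tensor_id d N S X)"
  unfolding hermitian_on_def
proof (intro ballI)
  fix x y assume x: "x \<in> idx d (full N)" and y: "y \<in> idx d (full N)"
  have "X (restr S x) (restr S y) = cnj (X (restr S y) (restr S x))"
    using assms(1) restr_in_idx[OF assms(2) x] restr_in_idx[OF assms(2) y]
    unfolding hermitian_on_def by blast
  then show "tensor_id d N S X x y = cnj (tensor_id d N S X y x)"
    using x y unfolding tensor_id_def by (simp add: eq_commute[of "restr (full N - S) y"])
qed

lemma density_imp_psd_on: "density d N A \<Longrightarrow> psd_on (idx d (full N)) A"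
  by (simp add: density_def psd_op_def psd_on_def sesq_def)

lemma apply_op_eq_op_apply: "apply_op d N = op_apply (idx d (full N))"
  by (simp add: apply_op_def op_apply_def fun_eq_iff)

lemma supp_subset_supp_tensor_id_ptrace:
  assumes "density d N A" "S \<subseteq> full N"
  shows "supp d N A \<subseteq> supp d N (tensor_id d N S (ptrace d N S A))"
proof -
  let ?I = "idx d (full N)"
  have fin: "finite ?I"
    by (simp add: finite_idx)
  have psd: "psd_on ?I A"
    using assms(1) by (rule density_imp_psd_on)
  have herm: "hermitian_on ?I A"
    using fin psd by (rule psd_on_imp_hermitian)
  have "range (op_apply ?I A) \<subseteq> range (op_apply ?I (tensor_id d N S (ptrace d N S A)))"
    using range_op_apply_subset_if_kernel_subset[OF fin
        tensor_id_hermitian[OF ptrace_hermitian[OF herm assms(2)] assms(2)] herm]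
      kernel_tensor_id_ptrace_subset[OF assms(2) psd]
    by blast
  then show ?thesis
    by (simp add: supp_def apply_op_eq_op_apply)
qed

theorem mainTheorem1:
  fixes d :: "nat \<Rightarrow> nat" and N M :: nat and Nb :: "nat \<Rightarrow> nat set"
    and \<rho> \<sigma> :: op
  assumes "\<forall>a<N. 0 < d a"
    and "nontrivial_nbhd N M Nb"
    and "density d N \<rho>"
    and "\<sigma> \<in> joining_set d N M Nb \<rho>"
  shows "supp d N \<sigma> \<subseteq> DQLS_subspace d N M Nb \<rho>"
proof -
  \<comment> \<open>only Nb k \<subseteq> {0..<N} is needed from the neighbourhood structure\<close>
  have \<sigma>: "density d N \<sigma>" "\<And>k. k < M \<Longrightarrow> ptrace d N (Nb k) \<sigma> = ptrace d N (Nb k) \<rho>"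
    using assms(4) by (auto simp: joining_set_def)
  have "Nb k \<subseteq> full N" if "k < M" for k
    using assms(2) that by (auto simp: nontrivial_nbhd_def)
  then have "supp d N \<sigma> \<subseteq> supp d N (tensor_id d N (Nb k) (ptrace d N (Nb k) \<rho>))" if "k < M" for k
    using supp_subset_supp_tensor_id_ptrace[OF \<sigma>(1)] \<sigma>(2) that by metis
  then show ?thesis
    by (auto simp: DQLS_subspace_def)
qed

end
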